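(* For distinct $a,b\in H^2$ and $k\in\mathbb R$ let $S_k(a,b)=\{x\in H^2: d_H(x,a)^2-d_H(x,b)^2=k\}$. For $\mathsf x=(x_1,x_2)$, $\mathsf y=(y_1,y_2)$ in $H^2\times H^2$ with $x_i\ne y_i$ let $E_k(\mathsf x,\mathsf y)=S_k(x_1,y_1)\times S_k(y_2,x_2)$. Let $\mathsf x,\mathsf y,\mathsf z\in H^2\times H^2$ be such that $\mathsf y$ is between $\mathsf x$ and $\mathsf z$. If $E_k(\mathsf x,\mathsf y)\cap E_l(\mathsf y,\mathsf z)\neq\emptyset$ for some $k,l\in\mathbb R$, then $kl>0$.
   Context: For $x,y,z\in H^2$, let $l_1=S_0(x,y)$ and $l_2=S_0(y,z)$ be the equidistant lines; if $l_1,l_2$ are disjoint, the complement of $l_1\cup l_2$ has three components, two half-planes bounded by $l_1$ resp. $l_2$, and a slab bounded by $l_1\cup l_2$. We say $y$ is between $x$ and $z$ if $l_1$ and $l_2$ are disjoint and $y$ lies in the slab. For points of $H^2\times H^2$, $\mathsf y$ is between $\mathsf x$ and $\mathsf z$ if for each $i=1,2$ the $i$-th coordinate $y_i$ is between $x_i$ and $z_i$ in this sense. $d_H$ is the hyperbolic distance. *)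

theory Defs
  imports "HOL-Analysis.Analysis"
begin

definition H2 :: "complex set" where
  "H2 = {z. Im z > 0}"

definition dH :: "complex \<Rightarrow> complex \<Rightarrow> real" where
  "dH z w = arcosh (1 + (cmod (z - w))\<^sup>2 / (2 * Im z * Im w))"

definition Sk :: "real \<Rightarrow> complex \<Rightarrow> complex \<Rightarrow> complex set" where
  "Sk k a b = {x \<in> H2. (dH x a)\<^sup>2 - (dH x b)\<^sup>2 = k}"

definition Ek :: "real \<Rightarrow> complex \<times> complex \<Rightarrow> complex \<times> complex \<Rightarrow> (complex \<times> complex) set" where
  "Ek k x y = Sk k (fst x) (fst y) \<times> Sk k (snd y) (snd x)"

text \<open>y is between x and z in H^2: the equidistant lines l1 = S_0(x,y), l2 = S_0(y,z)
  are disjoint and y lies in the slab, i.e. in the component of H^2 - (l1 \<union> l2)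
  whose boundary (within H^2) meets both l1 and l2.\<close>
definition between_H :: "complex \<Rightarrow> complex \<Rightarrow> complex \<Rightarrow> bool" where
  "between_H x y z \<longleftrightarrow>
     (let l1 = Sk 0 x y; l2 = Sk 0 y z;
          C = connected_component_set (H2 - (l1 \<union> l2)) y
      in l1 \<inter> l2 = {} \<and> y \<in> H2 - (l1 \<union> l2) \<and>
         closure C \<inter> l1 \<noteq> {} \<and> closure C \<inter> l2 \<noteq> {})"

definition between_HH :: "complex \<times> complex \<Rightarrow> complex \<times> complex \<Rightarrow> complex \<times> complex \<Rightarrow> bool" where
  "between_HH x y z \<longleftrightarrow>
     between_H (fst x) (fst y) (fst z) \<and> between_H (snd x) (snd y) (snd z)"

end

theory Submission
  imports Defs
begin

text \<open>Since \<open>cosh (dH p a) = 1 + |p - a|\<^sup>2 / (2 Im p Im a)\<close>, the point \<open>p\<close> is closer to \<open>a\<close> than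
  to \<open>b\<close> exactly when \<open>|p - a|\<^sup>2 / Im a < |p - b|\<^sup>2 / Im b\<close>, and this difference is affine in the
  coordinates \<open>(Re p, |p|\<^sup>2)\<close>, in which \<open>H2\<close> becomes the convex region above a parabola.
  If \<open>y\<close> is between \<open>x\<close> and \<open>z\<close>, the closure of the slab meets both bisectors, and by
  convexity a point that is at least as close to \<open>x\<close> and to \<open>z\<close> as to \<open>y\<close> would produce a
  common point of the two disjoint bisectors. So every point is strictly closer to \<open>y\<close> than to
  \<open>x\<close> or than to \<open>z\<close>. Applied to the two coordinates of a common point of \<open>E\<^sub>k(x,y)\<close> and
  \<open>E\<^sub>l(y,z)\<close>, this excludes \<open>k \<le> 0 \<le> l\<close> and \<open>l \<le> 0 \<le> k\<close>.\<close>

definition bisector_fn :: "complex \<Rightarrow> complex \<Rightarrow> complex \<Rightarrow> real" where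
  "bisector_fn a b p = (cmod (p - a))\<^sup>2 / Im a - (cmod (p - b))\<^sup>2 / Im b"

definition geod_fn :: "real \<Rightarrow> real \<Rightarrow> real \<Rightarrow> complex \<Rightarrow> real" where
  "geod_fn A B C p = A * (cmod p)\<^sup>2 + B * Re p + C"

lemma dH_nonneg: "p \<in> H2 \<Longrightarrow> a \<in> H2 \<Longrightarrow> dH p a \<ge> 0"
  unfolding dH_def H2_def by (intro arcosh_nonneg_real) auto

lemma dH_le_iff_bisector_fn:
  assumes "p \<in> H2" "a \<in> H2" "b \<in> H2"
  shows "dH p a \<le> dH p b \<longleftrightarrow> bisector_fn a b p \<le> 0"
proof -
  have ip: "Im p > 0" and ia: "Im a > 0" and ib: "Im b > 0"
    using assms by (auto simp: H2_def)
  define A where "A = (cmod (p - a))\<^sup>2 / Im a"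
  define B where "B = (cmod (p - b))\<^sup>2 / Im b"
  have "dH p a = arcosh (1 + A / (2 * Im p))" "dH p b = arcosh (1 + B / (2 * Im p))"
    using ip ia ib by (simp_all add: dH_def A_def B_def field_simps)
  moreover have "1 + A / (2 * Im p) \<ge> 1" "1 + B / (2 * Im p) \<ge> 1"
    using ip ia ib by (auto simp: A_def B_def)
  ultimately have "dH p a \<le> dH p b \<longleftrightarrow> A / (2 * Im p) \<le> B / (2 * Im p)"
    by (simp add: not_less[symmetric])
  also have "\<dots> \<longleftrightarrow> A \<le> B"
    using ip by (simp add: divide_le_cancel)
  finally show ?thesis
    by (simp add: bisector_fn_def A_def B_def)
qed

lemma bisector_fn_swap: "bisector_fn b a p = - bisector_fn a b p"
  by (simp add: bisector_fn_def)

lemma Sk_zero_eq_bisector_fn_zeros: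
  assumes "a \<in> H2" "b \<in> H2"
  shows "Sk 0 a b = {p \<in> H2. bisector_fn a b p = 0}"
proof -
  have "(dH p a)\<^sup>2 = (dH p b)\<^sup>2 \<longleftrightarrow> bisector_fn a b p = 0" if "p \<in> H2" for p
  proof -
    have "(dH p a)\<^sup>2 = (dH p b)\<^sup>2 \<longleftrightarrow> dH p a = dH p b"
      using dH_nonneg[OF that assms(1)] dH_nonneg[OF that assms(2)] by (simp add: power2_eq_iff_nonneg)
    also have "\<dots> \<longleftrightarrow> bisector_fn a b p = 0"
      unfolding order_eq_iff[of "dH p a"] dH_le_iff_bisector_fn[OF that assms]
        dH_le_iff_bisector_fn[OF that assms(2,1)] bisector_fn_swap[of b a]
      by auto
    finally show ?thesis .
  qed
  then show ?thesis
    by (auto simp: Sk_def)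
qed

lemma bisector_fn_eq_geod_fn:
  assumes "Im a \<noteq> 0" "Im b \<noteq> 0"
  shows "bisector_fn a b = geod_fn (1 / Im a - 1 / Im b) (2 * Re b / Im b - 2 * Re a / Im a)
      ((cmod a)\<^sup>2 / Im a - (cmod b)\<^sup>2 / Im b)"
  using assms unfolding bisector_fn_def geod_fn_def cmod_power2
  by (auto simp: field_simps power2_eq_square)

lemma continuous_on_bisector_fn: "continuous_on S (bisector_fn a b)"
  unfolding bisector_fn_def divide_inverse by (intro continuous_intros)

text \<open>The convexity of \<open>H2\<close> in the coordinates \<open>(Re p, |p|\<^sup>2)\<close>: the point \<open>r\<close> has the
  interpolated coordinates, and \<open>Im r\<^sup>2 > 0\<close> because \<open>Re\<^sup>2\<close> is convex.\<close>

lemma H2_geod_fn_interpolation: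
  assumes "q \<in> H2" "p \<in> H2" "0 \<le> u" "u \<le> 1"
  obtains r where "r \<in> H2"
    "\<And>A B C. geod_fn A B C r = (1 - u) * geod_fn A B C q + u * geod_fn A B C p"
proof -
  define V where "V = (1 - u) * Re q + u * Re p"
  define U where "U = (1 - u) * (cmod q)\<^sup>2 + u * (cmod p)\<^sup>2"
  have "U - V\<^sup>2 = (1 - u) * u * (Re q - Re p)\<^sup>2 + ((1 - u) * (Im q)\<^sup>2 + u * (Im p)\<^sup>2)"
    unfolding U_def V_def cmod_power2 by (simp add: power2_eq_square algebra_simps)
  moreover have "(1 - u) * (Im q)\<^sup>2 + u * (Im p)\<^sup>2 > 0"
  proof (cases "u = 0")
    case False
    then show ?thesis
      using assms by (intro add_nonneg_pos) (auto simp: H2_def)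
  qed (use assms in \<open>auto simp: H2_def\<close>)
  ultimately have pos: "U - V\<^sup>2 > 0"
    using assms(3,4) by (smt (verit) mult_nonneg_nonneg zero_le_power2)
  define r where "r = Complex V (sqrt (U - V\<^sup>2))"
  have "r \<in> H2" and r: "Re r = V" "(cmod r)\<^sup>2 = U"
    using pos by (simp_all add: r_def H2_def cmod_power2)
  moreover have "geod_fn A B C r = (1 - u) * geod_fn A B C q + u * geod_fn A B C p" for A B C
    unfolding geod_fn_def r U_def V_def by (simp add: algebra_simps)
  ultimately show ?thesis
    using that by blast
qed

text \<open>First move from \<open>q\<^sub>2\<close> towards \<open>p\<close> to a zero \<open>r\<^sub>1\<close> of \<open>f\<close> with \<open>g r\<^sub>1 \<ge> 0\<close>, then
  from \<open>q\<^sub>1\<close> towards \<open>r\<^sub>1\<close> along the zero set of \<open>f\<close> to a zero of \<open>g\<close>.\<close>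

lemma geod_fn_common_zero:
  fixes f g :: "complex \<Rightarrow> real"
  assumes f: "f = geod_fn A B C" and g: "g = geod_fn A' B' C'"
    and H: "q1 \<in> H2" "q2 \<in> H2" "p \<in> H2"
    and q1: "f q1 = 0" "g q1 < 0"
    and q2: "g q2 = 0" "f q2 > 0"
    and p: "f p \<le> 0" "g p \<ge> 0"
  obtains r where "r \<in> H2" "f r = 0" "g r = 0"
proof -
  define u where "u = f q2 / (f q2 - f p)"
  have u: "0 \<le> u" "u \<le> 1"
    using q2 p by (auto simp: u_def)
  obtain r1 where r1: "r1 \<in> H2" "f r1 = (1 - u) * f q2 + u * f p" "g r1 = (1 - u) * g q2 + u * g p"
    using H2_geod_fn_interpolation[OF H(2,3) u] unfolding f g by metis
  have "f r1 = 0"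
    using r1(2) q2 p by (simp add: u_def field_simps)
  moreover have "g r1 \<ge> 0"
    using r1(3) q2 p u by simp
  define v where "v = g q1 / (g q1 - g r1)"
  have v: "0 \<le> v" "v \<le> 1"
    using q1 \<open>g r1 \<ge> 0\<close> by (auto simp: v_def divide_simps)
  obtain r where "r \<in> H2" "f r = (1 - v) * f q1 + v * f r1" "g r = (1 - v) * g q1 + v * g r1"
    using H2_geod_fn_interpolation[OF H(1) r1(1) v] unfolding f g by metis
  moreover have "(1 - v) * g q1 + v * g r1 = 0"
    using q1 \<open>g r1 \<ge> 0\<close> by (simp add: v_def field_simps)
  ultimately show ?thesis
    using that q1 \<open>f r1 = 0\<close> by simp
qed

lemma connected_sign_closure:
  fixes f :: "'a::topological_space \<Rightarrow> real"
  assumes "connected C" "continuous_on (closure C) f" "y \<in> C" "f y > 0"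
    and "\<And>q. q \<in> C \<Longrightarrow> f q \<noteq> 0"
  shows "\<And>q. q \<in> closure C \<Longrightarrow> f q \<ge> 0"
proof -
  have fC: "continuous_on C f"
    using assms(2) closure_subset continuous_on_subset by blast
  have pos: "f q > 0" if "q \<in> C" for q
  proof (rule ccontr)
    assume "\<not> f q > 0"
    then have "0 \<in> f ` C"
      using connectedD_interval[OF connected_continuous_image[OF fC assms(1)], of "f q" "f y"]
        that assms(3,4) by fastforce
    then show False
      using assms(5) by force
  qed
  have "closed (closure C \<inter> f -` {0..})"
    by (rule continuous_closed_preimage[OF assms(2)]) auto
  moreover have "C \<subseteq> closure C \<inter> f -` {0..}"
    using pos closure_subset[of C] by (auto intro: less_imp_le)
  ultimately have "closure C \<subseteq> closure C \<inter> f -` {0..}"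
    by (rule closure_minimal[rotated])
  then show "\<And>q. q \<in> closure C \<Longrightarrow> f q \<ge> 0"
    by auto
qed

lemma between_H_closer_to_middle:
  assumes H: "x \<in> H2" "y \<in> H2" "z \<in> H2" "p \<in> H2"
    and "between_H x y z"
  shows "dH p y < dH p x \<or> dH p y < dH p z"
proof (rule ccontr)
  assume "\<not> ?thesis"
  then have px: "bisector_fn x y p \<le> 0" and pz: "bisector_fn y z p \<ge> 0"
    using dH_le_iff_bisector_fn[OF H(4,1,2)] dH_le_iff_bisector_fn[OF H(4,3,2)]
    by (auto simp: bisector_fn_swap[of z y])
  define l1 where "l1 = Sk 0 x y"
  define l2 where "l2 = Sk 0 y z"
  define C where "C = connected_component_set (H2 - (l1 \<union> l2)) y"
  have disj: "l1 \<inter> l2 = {}" and y: "y \<in> H2 - (l1 \<union> l2)"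
    and "closure C \<inter> l1 \<noteq> {}" "closure C \<inter> l2 \<noteq> {}"
    using \<open>between_H x y z\<close> unfolding between_H_def Let_def l1_def l2_def C_def by auto
  then obtain q1 q2 where q1: "q1 \<in> closure C" "q1 \<in> l1" and q2: "q2 \<in> closure C" "q2 \<in> l2"
    by blast
  have l1: "l1 = {q \<in> H2. bisector_fn x y q = 0}" and l2: "l2 = {q \<in> H2. bisector_fn y z q = 0}"
    using Sk_zero_eq_bisector_fn_zeros H unfolding l1_def l2_def by auto
  have C: "connected C" "y \<in> C" "C \<subseteq> H2 - (l1 \<union> l2)"
    using y by (auto simp: C_def connected_component_subset)
  have "bisector_fn x y q \<ge> 0" if "q \<in> closure C" for q
  proof (rule connected_sign_closure[OF C(1) continuous_on_bisector_fn C(2) _ _ that])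
    show "bisector_fn x y y > 0"
      using y H(1,2) l1 by (auto simp: bisector_fn_def H2_def less_le)
  qed (use C(3) l1 in auto)
  then have q2x: "bisector_fn x y q2 > 0"
    using q2 disj l1 l2 by (force simp: less_le)
  have "- bisector_fn y z q \<ge> 0" if "q \<in> closure C" for q
  proof (rule connected_sign_closure[OF C(1) _ C(2) _ _ that])
    show "- bisector_fn y z y > 0"
      using y H(2,3) l2 by (auto simp: bisector_fn_def H2_def less_le)
  qed (use C(3) l2 in \<open>auto intro: continuous_intros continuous_on_bisector_fn\<close>)
  then have q1z: "bisector_fn y z q1 < 0"
    using q1 disj l1 l2 by (force simp: less_le)
  have Im: "Im x \<noteq> 0" "Im y \<noteq> 0" "Im z \<noteq> 0"
    using H by (auto simp: H2_def)
  obtain r where "r \<in> H2" "bisector_fn x y r = 0" "bisector_fn y z r = 0"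
    by (rule geod_fn_common_zero[OF bisector_fn_eq_geod_fn[OF Im(1,2)] bisector_fn_eq_geod_fn[OF Im(2,3)]])
      (use q1 q2 l1 l2 H(4) q2x q1z px pz in auto)
  then show False
    using disj l1 l2 by auto
qed

theorem mainTheorem5:
  fixes x y z :: "complex \<times> complex" and k l :: real
  assumes "fst x \<in> H2" "snd x \<in> H2" "fst y \<in> H2" "snd y \<in> H2"
      "fst z \<in> H2" "snd z \<in> H2"
    and "between_HH x y z"
    and "Ek k x y \<inter> Ek l y z \<noteq> {}"
  shows "k * l > 0"
proof -
  obtain p1 p2 where "(p1, p2) \<in> Ek k x y" "(p1, p2) \<in> Ek l y z"
    using assms(8) by auto
  then have p: "p1 \<in> H2" "p2 \<in> H2"
    and k: "k = (dH p1 (fst x))\<^sup>2 - (dH p1 (fst y))\<^sup>2" "k = (dH p2 (snd y))\<^sup>2 - (dH p2 (snd x))\<^sup>2"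
    and l: "l = (dH p1 (fst y))\<^sup>2 - (dH p1 (fst z))\<^sup>2" "l = (dH p2 (snd z))\<^sup>2 - (dH p2 (snd y))\<^sup>2"
    by (auto simp: Ek_def Sk_def)
  have "dH p1 (fst y) < dH p1 (fst x) \<or> dH p1 (fst y) < dH p1 (fst z)"
    using between_H_closer_to_middle[OF assms(1,3,5) p(1)] assms(7) by (simp add: between_HH_def)
  then have "\<not> (k \<le> 0 \<and> 0 \<le> l)"
    using k(1) l(1) dH_nonneg[OF p(1)] assms(1,3,5) by (auto dest!: power2_le_imp_le)
  have "dH p2 (snd y) < dH p2 (snd x) \<or> dH p2 (snd y) < dH p2 (snd z)"
    using between_H_closer_to_middle[OF assms(2,4,6) p(2)] assms(7) by (simp add: between_HH_def)
  then have "\<not> (0 \<le> k \<and> l \<le> 0)"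
    using k(2) l(2) dH_nonneg[OF p(2)] assms(2,4,6) by (auto dest!: power2_le_imp_le)
  with \<open>\<not> (k \<le> 0 \<and> 0 \<le> l)\<close> show ?thesis
    by (smt (verit) mult_neg_neg mult_pos_pos)
qed

end
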